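(* Let $f:\mathbb{R}^2\setminus\{y=0\}\to\mathbb{R}^2$ be the Hénon–Devaney map $f(x,y)=\left(x+\frac1y,\ y-\frac1y-x\right)$. Then the hyperbolic periodic points of $f$ are dense in $\mathbb{R}^2$. *)

theory Defs
  imports "HOL-Analysis.Analysis"
begin

text \<open>The Henon--Devaney map, f(x,y) = (x + 1/y, y - 1/y - x), defined on the
  plane minus the line y = 0. As a HOL function it is total; values on y = 0 are
  irrelevant because all notions below require the orbit to avoid y = 0.\<close>
definition henon_devaney :: "real \<times> real \<Rightarrow> real \<times> real" where
  "henon_devaney p = (fst p + 1 / snd p, snd p - 1 / snd p - fst p)"

definition is_complex_eigenvalue :: "(real \<times> real \<Rightarrow> real \<times> real) \<Rightarrow> complex \<Rightarrow> bool" where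
  "is_complex_eigenvalue L mu \<longleftrightarrow>
     (let a11 = complex_of_real (fst (L (1, 0))); a21 = complex_of_real (snd (L (1, 0)));
          a12 = complex_of_real (fst (L (0, 1))); a22 = complex_of_real (snd (L (0, 1)))
      in \<exists>v1 v2 :: complex. (v1, v2) \<noteq> (0, 0) \<and>
           a11 * v1 + a12 * v2 = mu * v1 \<and> a21 * v1 + a22 * v2 = mu * v2)"

definition periodic_point :: "nat \<Rightarrow> real \<times> real \<Rightarrow> bool" where
  "periodic_point n p \<longleftrightarrow> n > 0 \<and> (\<forall>k<n. snd ((henon_devaney ^^ k) p) \<noteq> 0)
      \<and> (henon_devaney ^^ n) p = p"

definition hyperbolic_periodic_point :: "real \<times> real \<Rightarrow> bool" where
  "hyperbolic_periodic_point p \<longleftrightarrow> (\<exists>n L. periodic_point n p \<and>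
      ((henon_devaney ^^ n) has_derivative L) (at p) \<and>
      (\<forall>mu. is_complex_eigenvalue L mu \<longrightarrow> cmod mu \<noteq> 1))"

end

theory Submission
  imports Defs
begin

text \<open>Along an orbit one has x_{n+1} = y_n - y_{n+1}, so the second coordinates satisfy
  y_{n+1} + y_{n-1} = 2 y_n - 1/y_n, and periodic points correspond to periodic solutions of
  this recurrence. The derivative of f at any point is [[1, -c], [-1, 1 + c]] with c > 0, and
  products of such matrices stay in a cone of determinant-one matrices of trace > 2; hence
  every periodic point is hyperbolic.

  For density, Baire's theorem gives a dense set of points whose complete orbit avoids the
  line y = 0. A nonvanishing solution cannot keep one sign, since its slope decreases by
  1/y_n at each step and these decrements sum to infinity; a closer look at its sign changes
  yields indices far out on either side where y is positive (or negative) but small compared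
  with their distance from 0. Cutting the orbit there and repeating it periodically, one builds
  periodic sub- and supersolutions enclosing y up to \<epsilon> at the indices -1 and 0. By Perron's
  method the supremum of the periodic subsolutions between them is a periodic solution, that
  is, a periodic point close to the given one.\<close>

section \<open>Hyperbolicity of periodic points\<close>

definition matrix2 :: "real \<Rightarrow> real \<Rightarrow> real \<Rightarrow> real \<Rightarrow> real \<times> real \<Rightarrow> real \<times> real" where
  "matrix2 a b c d h = (a * fst h + b * snd h, c * fst h + d * snd h)"

lemma matrix2_comp:
  "matrix2 a' b' c' d' \<circ> matrix2 a b c d =
     matrix2 (a' * a + b' * c) (a' * b + b' * d) (c' * a + d' * c) (c' * b + d' * d)"
  by (simp add: fun_eq_iff matrix2_def algebra_simps)

lemma is_complex_eigenvalue_matrix2_cmod: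
  assumes det: "a * d - b * c = 1" and trace: "\<bar>a + d\<bar> > 2"
    and "is_complex_eigenvalue (matrix2 a b c d) \<mu>"
  shows "cmod \<mu> \<noteq> 1"
proof
  assume unimodular: "cmod \<mu> = 1"
  from assms(3) obtain v1 v2 :: complex where nonzero: "(v1, v2) \<noteq> (0, 0)"
    and e1: "of_real a * v1 + of_real b * v2 = \<mu> * v1"
    and e2: "of_real c * v1 + of_real d * v2 = \<mu> * v2"
    unfolding is_complex_eigenvalue_def matrix2_def Let_def by auto
  define q where "q = (of_real a - \<mu>) * (of_real d - \<mu>) - of_real b * of_real c"
  have "v1 * q = 0" "v2 * q = 0"
    using e1 e2 unfolding q_def by algebra+
  then have "q = 0" using nonzero by auto
  then have "of_real (a * d - b * c) - of_real (a + d) * \<mu> + \<mu>^2 = 0"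
    unfolding q_def by (simp add: algebra_simps power2_eq_square)
  then have charpoly: "1 - of_real (a + d) * \<mu> + \<mu>^2 = 0"
    using det by simp
  have re: "1 - (a + d) * Re \<mu> + (Re \<mu>)^2 - (Im \<mu>)^2 = 0"
    using arg_cong[OF charpoly, of Re] by (simp add: power2_eq_square)
  have im: "Im \<mu> = 0 \<or> 2 * Re \<mu> = a + d"
    using arg_cong[OF charpoly, of Im] by (simp add: power2_eq_square)
  have norm: "(Re \<mu>)^2 + (Im \<mu>)^2 = 1"
    using unimodular by (simp add: cmod_def)
  show False
  proof (cases "Im \<mu> = 0")
    case True
    then have "Re \<mu> = 1 \<or> Re \<mu> = -1" using norm by (simp add: power2_eq_1_iff)
    then show False using re True trace by auto
  next
    case False
    then have "a + d = 2 * Re \<mu>" using im by simp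
    moreover have "\<bar>Re \<mu>\<bar> \<le> 1" using abs_Re_le_cmod[of \<mu>] unimodular by simp
    ultimately show False using trace by simp
  qed
qed

lemma henon_devaney_has_derivative:
  assumes "snd q \<noteq> 0"
  shows "(henon_devaney has_derivative
     matrix2 1 (- (1 / (snd q)^2)) (- 1) (1 + 1 / (snd q)^2)) (at q)"
proof -
  have "(henon_devaney has_derivative
     (\<lambda>h. (fst h - snd h / (snd q)^2, snd h + snd h / (snd q)^2 - fst h))) (at q)"
    unfolding henon_devaney_def[abs_def]
    apply (rule has_derivative_eq_rhs)
     apply (rule derivative_eq_intros | use assms in simp)+
    apply (auto simp: fun_eq_iff power2_eq_square field_simps)
    done
  then show ?thesis by (simp add: matrix2_def[abs_def] algebra_simps)
qed

text \<open>The derivative of f at (x, y) is [[1, -c], [-1, 1 + c]] with c = 1/y^2 > 0, and left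
  multiplication by such matrices preserves the following conditions.\<close>
definition hd_cone :: "real \<Rightarrow> real \<Rightarrow> real \<Rightarrow> real \<Rightarrow> bool" where
  "hd_cone a b c d \<longleftrightarrow>
     b \<le> 0 \<and> a + c \<le> b + d \<and> 0 \<le> b + d \<and> 1 < a - b \<and> a * d - b * c = 1"

lemma hd_cone_derivative: "c > 0 \<Longrightarrow> hd_cone 1 (- c) (- 1) (1 + c)"
  unfolding hd_cone_def by (auto simp: algebra_simps)

lemma hd_cone_mult_derivative:
  assumes "hd_cone a b c d" "t \<ge> 0"
  shows "hd_cone (a - t * c) (b - t * d) (- a + (1 + t) * c) (- b + (1 + t) * d)"
proof -
  have "c \<le> d" "0 \<le> d" using assms(1) unfolding hd_cone_def by linarith+
  then have "t * c \<le> t * d" "0 \<le> t * d" using assms(2) by (simp_all add: mult_left_mono)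
  then show ?thesis using assms(1) unfolding hd_cone_def by (simp add: algebra_simps)
qed

lemma hd_cone_trace:
  assumes "hd_cone a b c d"
  shows "a + d > 2"
proof -
  define x y where "x = b + d" and "y = a - b"
  have "x \<ge> 0" "y > 1" using assms unfolding hd_cone_def x_def y_def by auto
  have "x * y - 1 = - b * (b + d - a - c)"
    using assms unfolding hd_cone_def x_def y_def by (simp add: algebra_simps)
  also have "\<dots> \<ge> 0" using assms unfolding hd_cone_def by (simp add: mult_nonpos_nonneg)
  finally have "x * y \<ge> 1" by simp
  show ?thesis
  proof (rule ccontr)
    assume "\<not> a + d > 2"
    then have "y \<le> 2 - x" unfolding x_def y_def by simp
    then have "x * y \<le> x * (2 - x)" using \<open>x \<ge> 0\<close> by (rule mult_left_mono)
    also have "\<dots> = 1 - (1 - x)^2" by (simp add: power2_eq_square algebra_simps)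
    also have "\<dots> < 1" using \<open>y \<le> 2 - x\<close> \<open>y > 1\<close> by simp
    finally show False using \<open>x * y \<ge> 1\<close> by simp
  qed
qed

definition iterates_defined :: "nat \<Rightarrow> real \<times> real \<Rightarrow> bool" where
  "iterates_defined n p \<longleftrightarrow> (\<forall>k<n. snd ((henon_devaney ^^ k) p) \<noteq> 0)"

lemma funpow_henon_devaney_has_derivative_cone:
  assumes "iterates_defined (Suc n) p"
  shows "\<exists>a b c d. hd_cone a b c d \<and>
    ((henon_devaney ^^ Suc n) has_derivative matrix2 a b c d) (at p)"
  using assms
proof (induction n)
  case 0
  then have "snd p \<noteq> 0" by (simp add: iterates_defined_def)
  then have "hd_cone 1 (- (1 / (snd p)^2)) (- 1) (1 + 1 / (snd p)^2)"
    "((henon_devaney ^^ Suc 0) has_derivative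
      matrix2 1 (- (1 / (snd p)^2)) (- 1) (1 + 1 / (snd p)^2)) (at p)"
    using hd_cone_derivative henon_devaney_has_derivative by simp_all
  then show ?case by blast
next
  case (Suc n)
  define q where "q = (henon_devaney ^^ Suc n) p"
  define t where "t = 1 / (snd q)^2"
  have "snd q \<noteq> 0" using Suc.prems unfolding q_def iterates_defined_def by blast
  then have t: "t > 0" unfolding t_def by simp
  have "iterates_defined (Suc n) p" using Suc.prems by (simp add: iterates_defined_def)
  then obtain a b c d where cone: "hd_cone a b c d"
    and D: "((henon_devaney ^^ Suc n) has_derivative matrix2 a b c d) (at p)"
    using Suc.IH by blast
  have "(henon_devaney has_derivative matrix2 1 (- t) (- 1) (1 + t)) (at q)"
    using henon_devaney_has_derivative[OF \<open>snd q \<noteq> 0\<close>] unfolding t_def .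
  then have "(henon_devaney \<circ> (henon_devaney ^^ Suc n) has_derivative
      matrix2 1 (- t) (- 1) (1 + t) \<circ> matrix2 a b c d) (at p)"
    using has_derivative_compose[OF D] unfolding q_def comp_def by blast
  then have "((henon_devaney ^^ Suc (Suc n)) has_derivative
      matrix2 (a - t * c) (b - t * d) (- a + (1 + t) * c) (- b + (1 + t) * d)) (at p)"
    by (simp add: matrix2_comp)
  with hd_cone_mult_derivative[OF cone] t show ?case by (meson less_imp_le)
qed

lemma funpow_henon_devaney_has_derivative:
  assumes "iterates_defined n p"
  shows "\<exists>a b c d. a * d - b * c = 1 \<and>
    ((henon_devaney ^^ n) has_derivative matrix2 a b c d) (at p)"
proof (cases n)
  case 0
  have "((\<lambda>x. x) has_derivative matrix2 1 0 0 1) (at p)"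
    by (rule has_derivative_eq_rhs[OF has_derivative_ident]) (simp add: fun_eq_iff matrix2_def)
  then show ?thesis
    using 0 by (intro exI[of _ 1] exI[of _ 0] exI[of _ 0] exI[of _ 1]) (simp add: id_def)
next
  case (Suc m)
  then show ?thesis
    using funpow_henon_devaney_has_derivative_cone[of m p] assms by (auto simp: hd_cone_def)
qed

lemma isCont_funpow_henon_devaney: "iterates_defined n p \<Longrightarrow> isCont (henon_devaney ^^ n) p"
  using funpow_henon_devaney_has_derivative has_derivative_continuous by blast

lemma periodic_point_hyperbolic:
  assumes "periodic_point n p"
  shows "hyperbolic_periodic_point p"
proof -
  obtain m where n: "n = Suc m" and "iterates_defined (Suc m) p"
    using assms unfolding periodic_point_def iterates_defined_def by (metis gr0_conv_Suc)
  then obtain a b c d where cone: "hd_cone a b c d"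
    and D: "((henon_devaney ^^ n) has_derivative matrix2 a b c d) (at p)"
    using funpow_henon_devaney_has_derivative_cone by blast
  have "a * d - b * c = 1" "\<bar>a + d\<bar> > 2"
    using cone hd_cone_trace[OF cone] unfolding hd_cone_def by auto
  then show ?thesis
    unfolding hyperbolic_periodic_point_def
    using assms D is_complex_eigenvalue_matrix2_cmod by blast
qed

section \<open>Orbits as solutions of a second-order recurrence\<close>

definition hd_defect :: "(int \<Rightarrow> real) \<Rightarrow> int \<Rightarrow> real" where
  "hd_defect z n = 2 * z n - z (n + 1) - z (n - 1) - 1 / z n"

definition hd_solution :: "(int \<Rightarrow> real) \<Rightarrow> bool" where
  "hd_solution z \<longleftrightarrow> (\<forall>n. hd_defect z n = 0)"

lemma hd_solution_rec: "hd_solution y \<Longrightarrow> y (n + 1) + y (n - 1) = 2 * y n - 1 / y n"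
  unfolding hd_solution_def hd_defect_def by (drule spec[of _ n]) linarith

lemma hd_defect_uminus: "hd_defect (\<lambda>n. - z n) n = - hd_defect z n"
  unfolding hd_defect_def by simp

lemma hd_solution_uminus: "hd_solution y \<Longrightarrow> hd_solution (\<lambda>n. - y n)"
  unfolding hd_solution_def by (simp add: hd_defect_uminus)

lemma hd_solution_reflect: "hd_solution y \<Longrightarrow> hd_solution (\<lambda>n. y (- 1 - n))"
  unfolding hd_solution_def hd_defect_def
proof
  fix n
  assume "\<forall>n. 2 * y n - y (n + 1) - y (n - 1) - 1 / y n = 0"
  then have "2 * y (- 1 - n) - y (- 1 - n + 1) - y (- 1 - n - 1) - 1 / y (- 1 - n) = 0" ..
  then show "2 * y (- 1 - n) - y (- 1 - (n + 1)) - y (- 1 - (n - 1)) - 1 / y (- 1 - n) = 0"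
    by (simp add: algebra_simps)
qed

lemma hd_defect_mono:
  assumes "z n = w n" "w (n + 1) \<le> z (n + 1)" "w (n - 1) \<le> z (n - 1)"
  shows "hd_defect z n \<le> hd_defect w n"
  using assms unfolding hd_defect_def by simp

lemma periodic_mod_eq:
  fixes z :: "int \<Rightarrow> 'a"
  assumes periodic: "\<forall>n. z (n + P) = z n" and "m mod P = n mod P"
  shows "z m = z n"
proof -
  have shift: "z (r + k * P) = z r" for r k
  proof (induction k rule: int_induct[where k = 0])
    case (step1 i)
    then show ?case using periodic[rule_format, of "r + i * P"] by (simp add: algebra_simps)
  next
    case (step2 i)
    then show ?case using periodic[rule_format, of "r + (i - 1) * P"] by (simp add: algebra_simps)
  qed simp
  have "z m = z (m mod P)" using shift[of "m mod P" "m div P"] by simp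
  also have "\<dots> = z n" using shift[of "n mod P" "n div P"] assms(2) by simp
  finally show ?thesis .
qed

text \<open>hd_reverse is an involution conjugating f to its inverse, so the second coordinates
  of the forward orbit of hd_reverse p are y_{-1}, y_{-2}, ... of the backward orbit of p.\<close>
definition hd_reverse :: "real \<times> real \<Rightarrow> real \<times> real" where
  "hd_reverse p = (- fst p, fst p + snd p)"

definition orbit_seq :: "real \<times> real \<Rightarrow> int \<Rightarrow> real" where
  "orbit_seq p n =
    (if n \<ge> 0 then snd ((henon_devaney ^^ nat n) p)
     else snd ((henon_devaney ^^ nat (- 1 - n)) (hd_reverse p)))"

lemma orbit_seq_0: "orbit_seq p 0 = snd p"
  by (simp add: orbit_seq_def)

lemma orbit_seq_minus_1: "orbit_seq p (- 1) = fst p + snd p"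
  by (simp add: orbit_seq_def hd_reverse_def)

lemma snd_funpow_henon_devaney_Suc_Suc:
  fixes q :: "real \<times> real"
  defines "y k \<equiv> snd ((henon_devaney ^^ k) q)"
  shows "y (Suc (Suc k)) = 2 * y (Suc k) - y k - 1 / y (Suc k)"
  unfolding y_def by (simp add: henon_devaney_def)

lemma snd_henon_devaney: "snd (henon_devaney q) = 2 * snd q - (fst q + snd q) - 1 / snd q"
  by (simp add: henon_devaney_def)

lemma hd_solution_orbit_seq: "hd_solution (orbit_seq p)"
  unfolding hd_solution_def hd_defect_def
proof
  fix n :: int
  consider "n \<ge> 1" | "n = 0" | "n = - 1" | "n \<le> - 2" by linarith
  then show "2 * orbit_seq p n - orbit_seq p (n + 1) - orbit_seq p (n - 1) - 1 / orbit_seq p n = 0"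
  proof cases
    case 1
    define k where "k = nat (n - 1)"
    have "nat (n + 1) = Suc (Suc k)" "nat n = Suc k" "nat (n - 1) = k"
      using 1 unfolding k_def by auto
    with 1 show ?thesis
      unfolding orbit_seq_def by (simp del: funpow.simps add: snd_funpow_henon_devaney_Suc_Suc)
  next
    case 4
    define k where "k = nat (- 2 - n)"
    have "nat (- 1 - (n - 1)) = Suc (Suc k)" "nat (- 1 - n) = Suc k" "nat (- 1 - (n + 1)) = k"
      using 4 unfolding k_def by auto
    with 4 show ?thesis
      unfolding orbit_seq_def by (simp del: funpow.simps add: snd_funpow_henon_devaney_Suc_Suc)
  qed (simp_all add: orbit_seq_def hd_reverse_def snd_henon_devaney)
qed

lemma funpow_henon_devaney_solution:
  assumes "hd_solution s"
  shows "(henon_devaney ^^ k) (s (- 1) - s 0, s 0) = (s (int k - 1) - s (int k), s (int k))"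
proof (induction k)
  case (Suc k)
  have "s (int k + 1) = 2 * s (int k) - s (int k - 1) - 1 / s (int k)"
    using hd_solution_rec[OF assms, of "int k"] by simp
  with Suc show ?case by (simp add: henon_devaney_def algebra_simps)
qed simp

lemma periodic_point_of_solution:
  assumes "hd_solution s" "\<forall>n. s n \<noteq> 0" "P > 0" "\<forall>n. s (n + P) = s n"
  shows "periodic_point (nat P) (s (- 1) - s 0, s 0)"
proof -
  have "s (P - 1) = s (- 1)" "s P = s 0"
    using assms(4)[rule_format, of "- 1"] assms(4)[rule_format, of 0] by simp_all
  then show ?thesis
    using assms(2,3) unfolding periodic_point_def funpow_henon_devaney_solution[OF assms(1)]
    by simp
qed

section \<open>Sign changes of nonvanishing solutions\<close>

lemma concave_seq_le_tangent:
  fixes z :: "nat \<Rightarrow> real"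
  assumes concave: "\<And>k. z (Suc (Suc k)) - z (Suc k) \<le> z (Suc k) - z k"
  shows "z (k + m) \<le> z k + real m * (z (Suc k) - z k)"
proof -
  have slope: "z (Suc (k + j)) - z (k + j) \<le> z (Suc k) - z k" for j
    by (induction j) (auto intro: order_trans[OF concave])
  show ?thesis
  proof (induction m)
    case (Suc m)
    have "z (k + Suc m) \<le> z (k + m) + (z (Suc k) - z k)" using slope[of m] by simp
    with Suc show ?case by (simp add: algebra_simps)
  qed simp
qed

lemma not_summable_inverse_linear:
  fixes z :: "nat \<Rightarrow> real"
  assumes "C > 0" "\<And>i. 0 < z i" "\<And>i. z i \<le> C * real (Suc i)"
  shows "\<not> summable (\<lambda>i. 1 / z i)"
proof
  assume "summable (\<lambda>i. 1 / z i)"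
  moreover have "norm (1 / C * (1 / real (Suc i))) \<le> 1 / z i" for i
  proof -
    have "1 / (C * real (Suc i)) \<le> 1 / z i" using assms by (intro divide_left_mono) auto
    then show ?thesis using \<open>C > 0\<close> by simp
  qed
  ultimately have "summable (\<lambda>i. 1 / C * (1 / real (Suc i)))"
    by (rule summable_comparison_test'[where N = 0])
  then have "summable (\<lambda>i. inverse (real i))"
    using \<open>C > 0\<close> summable_Suc_iff[of "\<lambda>i. inverse (real i)"] by (simp add: divide_inverse)
  then show False using not_summable_harmonic by blast
qed

text \<open>Along a positive solution the slope y_{n+1} - y_n decreases by 1/y_{n+1} at each
  step. If it ever becomes negative, y eventually does too; otherwise y grows at most
  linearly, so the total decrease of the slope is a divergent harmonic-type series.\<close>
lemma hd_solution_not_eventually_positive: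
  assumes sol: "hd_solution y" and pos: "\<forall>n\<ge>N. y n > 0"
  shows False
proof -
  define z where "z k = y (N + int k)" for k
  define E where "E k = z (Suc k) - z k" for k
  have z_pos: "z k > 0" for k unfolding z_def using pos by simp
  have E_Suc: "E (Suc k) = E k - 1 / z (Suc k)" for k
    using hd_solution_rec[OF sol, of "N + int k + 1"] unfolding E_def z_def
    by (simp add: algebra_simps)
  have tangent: "z (k + m) \<le> z k + real m * E k" for k m
    unfolding E_def
  proof (rule concave_seq_le_tangent)
    show "z (Suc (Suc j)) - z (Suc j) \<le> z (Suc j) - z j" for j
      using E_Suc[of j] z_pos[of "Suc j"] unfolding E_def by simp
  qed
  have E_nonneg: "E k \<ge> 0" for k
  proof (rule ccontr)
    assume "\<not> E k \<ge> 0"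
    then obtain m where "z k < real m * (- E k)"
      using reals_Archimedean3[of "- E k"] by auto
    then have "z (k + m) < 0" using tangent[of k m] by simp
    then show False using z_pos[of "k + m"] by simp
  qed
  have summable_inv: "summable (\<lambda>i. 1 / z (Suc i))"
  proof (rule summableI_nonneg_bounded)
    show "0 \<le> 1 / z (Suc i)" for i using z_pos[of "Suc i"] by simp
    have "(\<Sum>i<m. 1 / z (Suc i)) = (\<Sum>i<m. E i - E (Suc i))" for m by (simp add: E_Suc)
    also have "\<dots> m = E 0 - E m" for m by (rule sum_lessThan_telescope')
    finally show "(\<Sum>i<m. 1 / z (Suc i)) \<le> E 0" for m using E_nonneg[of m] by simp
  qed
  have linear: "z (Suc i) \<le> (z 0 + E 0) * real (Suc i)" for i
  proof -
    have "z 0 \<le> z 0 * real (Suc i)" using z_pos[of 0] by simp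
    then show ?thesis using tangent[of 0 "Suc i"] by (simp add: algebra_simps)
  qed
  have "\<not> summable (\<lambda>i. 1 / z (Suc i))"
    by (rule not_summable_inverse_linear[of "z 0 + E 0"])
      (use add_pos_nonneg[OF z_pos E_nonneg] z_pos linear in auto)
  then show False using summable_inv by blast
qed

lemma hd_solution_changes_sign:
  assumes "hd_solution y" "\<forall>n. y n \<noteq> 0"
  shows "\<exists>n\<ge>N. y n < 0" and "\<exists>n\<ge>N. y n > 0"
proof -
  show "\<exists>n\<ge>N. y n < 0"
    using hd_solution_not_eventually_positive[OF assms(1), of N] assms(2)
    by (meson linorder_neqE_linordered_idom)
  show "\<exists>n\<ge>N. y n > 0"
    using hd_solution_not_eventually_positive[OF hd_solution_uminus[OF assms(1)], of N] assms(2)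
    by (meson linorder_neqE_linordered_idom neg_0_less_iff_less)
qed

lemma last_positive_before:
  fixes y :: "int \<Rightarrow> real"
  assumes "\<forall>n. y n \<noteq> 0" "p \<le> q" "y p > 0" "y q < 0"
  shows "\<exists>e. p \<le> e \<and> e < q \<and> y e > 0 \<and> y (e + 1) < 0"
proof -
  define S where "S = {n. p \<le> n \<and> n \<le> q \<and> y n > 0}"
  define e where "e = Max S"
  have "finite S" unfolding S_def by (rule finite_subset[of _ "{p..q}"]) auto
  moreover have "p \<in> S" unfolding S_def using assms by simp
  ultimately have "e \<in> S" "e + 1 \<notin> S"
    unfolding e_def using Max_ge[OF \<open>finite S\<close>, of "Max S + 1"] by (auto intro: Max_in)
  then have "p \<le> e" "e < q" "y e > 0" "\<not> y (e + 1) > 0"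
    using assms unfolding S_def by (auto simp: order_le_less)
  then show ?thesis using assms(1)[rule_format, of "e + 1"] by (auto simp: not_less order_le_less)
qed

text \<open>Going backwards from e, the slope y_m - y_{m-1} starts at 1/y_e - (y_e - y_{e+1}) and
  grows by at most 1/y_e per step as long as y stays above y_e.\<close>
lemma hd_solution_increasing_backwards:
  assumes sol: "hd_solution y" and pos: "y e > 0" and "y (e + 1) < 0"
    and d: "real d < (y e - y (e + 1)) * y e"
  shows "y e \<le> y (e - int d)"
proof -
  define \<sigma> where "\<sigma> = y e - y (e + 1)"
  have slope_rec: "y m - y (m - 1) = y (m + 1) - y m + 1 / y m" for m
    using hd_solution_rec[OF sol, of m] by simp
  have "k \<le> d \<longrightarrow> y e \<le> y (e - int k) \<and>
      y (e - int k) - y (e - int k - 1) \<le> - \<sigma> + (real k + 1) / y e"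
    for k
  proof (induction k)
    case 0
    show ?case using slope_rec[of e] unfolding \<sigma>_def by simp
  next
    case (Suc k)
    show ?case
    proof
      assume "Suc k \<le> d"
      then have IH: "y e \<le> y (e - int k)"
        "y (e - int k) - y (e - int k - 1) \<le> - \<sigma> + (real k + 1) / y e"
        using Suc.IH by auto
      have "real (Suc k) < \<sigma> * y e" using \<open>Suc k \<le> d\<close> d unfolding \<sigma>_def by linarith
      then have "(real k + 1) / y e < \<sigma>" using pos by (simp add: field_simps)
      then have ge: "y e \<le> y (e - int k - 1)" using IH by linarith
      then have "1 / y (e - int k - 1) \<le> 1 / y e" using pos by (simp add: frac_le)
      then have "y (e - int k - 1) - y (e - int k - 1 - 1) \<le> - \<sigma> + (real k + 2) / y e"
        using slope_rec[of "e - int k - 1"] IH(2) by (simp add: add_divide_distrib)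
      with ge show "y e \<le> y (e - int (Suc k)) \<and>
          y (e - int (Suc k)) - y (e - int (Suc k) - 1) \<le> - \<sigma> + (real (Suc k) + 1) / y e"
        by (simp add: algebra_simps)
    qed
  qed
  then show ?thesis by blast
qed

text \<open>The sublinear bound y_e \<le> \<kappa> e is what later allows the orbit to be cut at e.\<close>
lemma hd_solution_small_positive:
  fixes \<kappa> :: real
  assumes sol: "hd_solution y" and nz: "\<forall>n. y n \<noteq> 0" and "\<kappa> > 0"
  shows "\<exists>e\<ge>N. 0 < y e \<and> y e \<le> \<kappa> * of_int e"
proof -
  obtain j1 where j1: "j1 \<ge> max N (max 1 \<lceil>1 / \<kappa>^2\<rceil>)" "y j1 < 0"
    using hd_solution_changes_sign(1)[OF sol nz] by blast
  obtain j2 where j2: "j2 \<ge> j1" "y j2 > 0"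
    using hd_solution_changes_sign(2)[OF sol nz] by blast
  obtain j3 where j3: "j3 \<ge> j2" "y j3 < 0"
    using hd_solution_changes_sign(1)[OF sol nz] by blast
  obtain e where e: "j2 \<le> e" "y e > 0" "y (e + 1) < 0"
    using last_positive_before[OF nz j3(1) j2(2) j3(2)] by blast
  have "j1 < e" using j1 j2 e by (cases "j1 = j2") auto
  have "e \<ge> 1" "real_of_int e \<ge> 1 / \<kappa>^2" using j1 \<open>j1 < e\<close> by linarith+
  have "y e \<le> \<kappa> * e"
  proof (rule ccontr)
    assume "\<not> y e \<le> \<kappa> * e"
    then have "\<kappa> * e < y e" by simp
    have "real (nat (e - j1)) \<le> e" using j1 \<open>j1 < e\<close> by simp
    also have "\<dots> \<le> \<kappa>^2 * e * e"
      using \<open>e \<ge> 1\<close> \<open>e \<ge> 1 / \<kappa>^2\<close> \<open>\<kappa> > 0\<close> by (simp add: field_simps)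
    also have "\<dots> = (\<kappa> * e) * (\<kappa> * e)" by (simp add: power2_eq_square)
    also have "\<dots> < y e * y e"
      using \<open>\<kappa> * e < y e\<close> \<open>e \<ge> 1\<close> \<open>\<kappa> > 0\<close> e(2) by (intro mult_strict_mono) auto
    also have "\<dots> < (y e - y (e + 1)) * y e" using e by simp
    finally have "y e \<le> y (e - int (nat (e - j1)))"
      using hd_solution_increasing_backwards[OF sol e(2,3)] by blast
    then show False using \<open>j1 < e\<close> j1 e by simp
  qed
  then show ?thesis using e j1 \<open>j1 < e\<close> by (intro exI[of _ e]) auto
qed

lemma hd_solution_cut_points:
  fixes \<kappa> :: real
  assumes sol: "hd_solution y" and nz: "\<forall>n. y n \<noteq> 0" and "\<kappa> > 0"
  shows "\<exists>ma ka. ma < - 1 \<and> 0 < ka \<and> 0 < y ma \<and> y ma \<le> \<kappa> * of_int (- 1 - ma) \<and>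
    0 < y ka \<and> y ka \<le> \<kappa> * of_int ka"
proof -
  obtain ka where "ka \<ge> 1" "0 < y ka" "y ka \<le> \<kappa> * ka"
    using hd_solution_small_positive[OF sol nz \<open>\<kappa> > 0\<close>] by blast
  moreover obtain e where "e \<ge> 1" "0 < y (- 1 - e)" "y (- 1 - e) \<le> \<kappa> * e"
    using hd_solution_small_positive[OF hd_solution_reflect[OF sol] _ \<open>\<kappa> > 0\<close>] nz by force
  ultimately show ?thesis by (intro exI[of _ "- 1 - e"] exI[of _ ka]) auto
qed

section \<open>Perron's method for periodic solutions\<close>

lemma hd_defect_periodic:
  assumes "\<forall>n. z (n + P) = z n"
  shows "hd_defect z (n + P) = hd_defect z n"
  using assms[rule_format, of n] assms[rule_format, of "n + 1"] assms[rule_format, of "n - 1"]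
  unfolding hd_defect_def by (simp add: algebra_simps)

lemma hd_defect_le_of_le:
  assumes "z n \<le> s n" "z (n + 1) \<le> s (n + 1)" "z (n - 1) \<le> s (n - 1)"
    and "0 < m" "m \<le> z n * s n"
  shows "hd_defect s n \<le> hd_defect z n + (2 + 1 / m) * (s n - z n)"
proof -
  have "z n * s n > 0" using assms by linarith
  then have "z n \<noteq> 0" "s n \<noteq> 0" by auto
  then have "1 / z n - 1 / s n = (s n - z n) / (z n * s n)"
    by (simp add: field_simps)
  also have "\<dots> \<le> (s n - z n) / m"
    using assms by (intro divide_left_mono) auto
  finally have inv: "1 / z n - 1 / s n \<le> (s n - z n) / m" .
  have "hd_defect s n = hd_defect z n + 2 * (s n - z n) - (s (n + 1) - z (n + 1))
      - (s (n - 1) - z (n - 1)) + (1 / z n - 1 / s n)"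
    unfolding hd_defect_def by simp
  also have "\<dots> \<le> hd_defect z n + 2 * (s n - z n) + (s n - z n) / m"
    using assms(2,3) inv by linarith
  also have "\<dots> = hd_defect z n + (2 + 1 / m) * (s n - z n)"
    using \<open>0 < m\<close> by (simp add: field_simps)
  finally show ?thesis .
qed

lemma hd_defect_raise:
  assumes "w n \<noteq> 0" "0 \<le> t" "t \<le> \<bar>w n\<bar> / 2"
    and "z n = w n + t" "w (n + 1) \<le> z (n + 1)" "w (n - 1) \<le> z (n - 1)"
  shows "hd_defect z n \<le> hd_defect w n + t * (2 + 2 / (w n)^2)"
proof -
  have "0 \<le> w n * (w n + 2 * t)"
    using assms(2,3) by (cases "w n \<ge> 0") (auto intro: mult_nonpos_nonpos)
  then have "(w n)^2 / 2 \<le> w n * (w n + t)"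
    by (simp add: power2_eq_square algebra_simps)
  moreover have "(w n)^2 > 0" using assms(1) by simp
  ultimately have "w n * (w n + t) > 0" by linarith
  then have "w n + t \<noteq> 0" by auto
  then have "1 / w n - 1 / (w n + t) = t / (w n * (w n + t))"
    using assms(1) by (simp add: field_simps)
  also have "\<dots> \<le> t / ((w n)^2 / 2)"
    using \<open>(w n)^2 / 2 \<le> w n * (w n + t)\<close> \<open>(w n)^2 > 0\<close> \<open>w n * (w n + t) > 0\<close> assms(2)
    by (intro divide_left_mono) auto
  finally show ?thesis
    using assms(4-6) unfolding hd_defect_def by (simp add: algebra_simps)
qed

lemma interval_mult_ge:
  fixes a b x y :: real
  assumes "a > 0 \<or> b < 0" "a \<le> x" "x \<le> b" "a \<le> y" "y \<le> b"
  shows "min (a^2) (b^2) \<le> x * y"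
proof (cases "a > 0")
  case True
  then have "a * a \<le> x * y" using assms by (intro mult_mono) auto
  then show ?thesis by (simp add: power2_eq_square min.coboundedI1)
next
  case False
  then have "b < 0" using assms(1) by simp
  have "0 \<le> x * (y - b)" "0 \<le> b * (x - b)"
    using assms \<open>b < 0\<close> by (auto intro: mult_nonpos_nonpos)
  then have "b * b \<le> x * y" by (simp add: algebra_simps)
  then show ?thesis by (simp add: power2_eq_square min.coboundedI2)
qed

lemma periodic_subsolution_raise:
  assumes "\<forall>k. s (k + P) = s k" "\<forall>k. b (k + P) = b k" "\<forall>k. s k \<le> b k"
    and sub: "\<forall>k. hd_defect s k \<le> 0" and neg: "hd_defect s n < 0"
    and "s n < b n" "s n \<noteq> 0"
  shows "\<exists>z. (\<forall>k. z (k + P) = z k) \<and> (\<forall>k. s k \<le> z k \<and> z k \<le> b k) \<and>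
    (\<forall>k. hd_defect z k \<le> 0) \<and> s n < z n"
proof -
  define c where "c = 2 + 2 / (s n)^2"
  have "c > 0" unfolding c_def by (simp add: add_pos_nonneg)
  define t where "t = min (b n - s n) (min (\<bar>s n\<bar> / 2) (- hd_defect s n / c))"
  have "- hd_defect s n / c > 0" using neg \<open>c > 0\<close> by (intro divide_pos_pos) auto
  then have "t > 0" unfolding t_def using assms(6,7) by simp
  define z where "z k = s k + (if k mod P = n mod P then t else 0)" for k
  have s_le_z: "s k \<le> z k" for k unfolding z_def using \<open>t > 0\<close> by simp
  have z_periodic: "z (k + P) = z k" for k unfolding z_def using assms(1) by simp
  have same: "s k = s n" "b k = b n" "hd_defect s k = hd_defect s n" if "k mod P = n mod P" for k
    using periodic_mod_eq[OF assms(1) that] periodic_mod_eq[OF assms(2) that]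
      periodic_mod_eq[OF _ that, of "hd_defect s"] hd_defect_periodic[OF assms(1)] by auto
  have t_le: "t \<le> b n - s n" "t \<le> \<bar>s n\<bar> / 2" "t \<le> - hd_defect s n / c"
    unfolding t_def by (rule min.cobounded1, (intro min.coboundedI2 min.cobounded1 min.cobounded2)+)
  have "z k \<le> b k" for k
    using same[of k] assms(3) t_le(1) unfolding z_def by auto
  moreover have "hd_defect z k \<le> 0" for k
  proof (cases "k mod P = n mod P")
    case True
    have "hd_defect z k \<le> hd_defect s k + t * c"
      unfolding c_def same(1)[OF True, symmetric]
      using same(1)[OF True] assms(7) s_le_z \<open>t > 0\<close> t_le(2) True
      by (intro hd_defect_raise) (auto simp: z_def)
    also have "\<dots> \<le> 0"
      using same(3)[OF True] t_le(3) \<open>c > 0\<close> by (simp add: field_simps)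
    finally show ?thesis .
  next
    case False
    then have "hd_defect z k \<le> hd_defect s k" using s_le_z by (intro hd_defect_mono) (auto simp: z_def)
    then show ?thesis using sub by (meson order_trans)
  qed
  moreover have "s n < z n" unfolding z_def using \<open>t > 0\<close> by simp
  ultimately show ?thesis using s_le_z z_periodic by blast
qed

lemma hd_defect_SUP_le:
  fixes S :: "(int \<Rightarrow> real) set"
  assumes "S \<noteq> {}" and bdd: "\<And>k. bdd_above ((\<lambda>z. z k) ` S)"
    and sub: "\<And>z. z \<in> S \<Longrightarrow> hd_defect z n \<le> 0"
    and "m > 0" and m_le: "\<And>z. z \<in> S \<Longrightarrow> m \<le> z n * (SUP z\<in>S. z n)"
  shows "hd_defect (\<lambda>k. SUP z\<in>S. z k) n \<le> 0"
proof (rule field_le_epsilon)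
  define s where "s k = (SUP z\<in>S. z k)" for k
  have le_s: "z k \<le> s k" if "z \<in> S" for z k
    unfolding s_def using that bdd by (rule cSUP_upper)
  fix e :: real assume "e > 0"
  define c where "c = 2 + 1 / m"
  have "c > 0" unfolding c_def using \<open>m > 0\<close> by (simp add: add_pos_nonneg)
  then have "s n - e / c < (SUP z\<in>S. z n)"
    using \<open>e > 0\<close> unfolding s_def[symmetric] by simp
  then obtain z where "z \<in> S" "s n - e / c < z n"
    using less_cSUP_iff[OF \<open>S \<noteq> {}\<close> bdd] by blast
  then have "hd_defect s n \<le> hd_defect z n + c * (s n - z n)"
    unfolding c_def using le_s \<open>m > 0\<close> m_le unfolding s_def
    by (intro hd_defect_le_of_le) auto
  also have "\<dots> \<le> 0 + e"
    using sub[OF \<open>z \<in> S\<close>] \<open>s n - e / c < z n\<close> \<open>c > 0\<close> by (intro add_mono) (simp_all add: field_simps)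
  finally show "hd_defect (\<lambda>k. SUP z\<in>S. z k) n \<le> 0 + e" unfolding s_def .
qed

lemma hd_solution_of_maximal:
  assumes "\<forall>k. s (k + P) = s k" "\<forall>k. b (k + P) = b k" "\<forall>k. s k \<le> b k" "\<forall>k. s k \<noteq> 0"
    and sub: "\<forall>k. hd_defect s k \<le> 0" and super: "\<forall>k. hd_defect b k \<ge> 0"
    and maximal: "\<And>z k. \<forall>k. z (k + P) = z k \<Longrightarrow> \<forall>k. s k \<le> z k \<and> z k \<le> b k \<Longrightarrow>
      \<forall>k. hd_defect z k \<le> 0 \<Longrightarrow> z k \<le> s k"
  shows "hd_solution s"
  unfolding hd_solution_def
proof
  fix n
  show "hd_defect s n = 0"
  proof (rule ccontr)
    assume "hd_defect s n \<noteq> 0"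
    then have neg: "hd_defect s n < 0" using sub by (simp add: order_less_le)
    have "s n < b n"
    proof (rule ccontr)
      assume "\<not> s n < b n"
      then have "hd_defect b n \<le> hd_defect s n"
        using assms(3) by (intro hd_defect_mono) (auto intro: antisym)
      then show False using neg super by (meson not_le order_trans)
    qed
    then obtain z where "\<forall>k. z (k + P) = z k" "\<forall>k. s k \<le> z k \<and> z k \<le> b k"
      "\<forall>k. hd_defect z k \<le> 0" "s n < z n"
      using periodic_subsolution_raise[of s P b n] assms(1-4) sub neg by blast
    then show False using maximal[of z n] by simp
  qed
qed

text \<open>Perron's method: the supremum of the periodic subsolutions between a and b is a
  solution; the sign condition keeps it away from the singularity at 0.\<close>
lemma periodic_solution_between:
  fixes a b :: "int \<Rightarrow> real"
  assumes pa: "\<forall>n. a (n + P) = a n" and pb: "\<forall>n. b (n + P) = b n"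
    and ab: "\<forall>n. a n \<le> b n" and sign: "\<forall>n. a n > 0 \<or> b n < 0"
    and sub: "\<forall>n. hd_defect a n \<le> 0" and super: "\<forall>n. hd_defect b n \<ge> 0"
  shows "\<exists>s. (\<forall>n. s (n + P) = s n) \<and> (\<forall>n. a n \<le> s n \<and> s n \<le> b n) \<and> hd_solution s"
proof -
  define S where "S = {z. (\<forall>n. z (n + P) = z n) \<and> (\<forall>n. a n \<le> z n \<and> z n \<le> b n) \<and>
    (\<forall>n. hd_defect z n \<le> 0)}"
  define s where "s n = (SUP z\<in>S. z n)" for n
  have "a \<in> S" unfolding S_def using pa ab sub by auto
  have bdd: "bdd_above ((\<lambda>z. z n) ` S)" for n
    unfolding bdd_above_def S_def by auto
  have le_s: "z n \<le> s n" if "z \<in> S" for z n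
    unfolding s_def using that bdd by (rule cSUP_upper)
  have s_le_b: "s n \<le> b n" for n
    unfolding s_def using \<open>a \<in> S\<close> by (intro cSUP_least) (auto simp: S_def)
  have a_le_s: "a n \<le> s n" for n using le_s[OF \<open>a \<in> S\<close>] .
  have s_periodic: "s (n + P) = s n" for n
    unfolding s_def by (rule SUP_cong) (auto simp: S_def)
  have "s n \<noteq> 0" for n using sign a_le_s s_le_b by (metis not_le order_trans)
  have s_sub: "hd_defect s n \<le> 0" for n
  proof -
    have "S \<noteq> {}" using \<open>a \<in> S\<close> by blast
    moreover have "hd_defect z n \<le> 0" if "z \<in> S" for z using that unfolding S_def by blast
    moreover have "min ((a n)^2) ((b n)^2) > 0"
      using sign[rule_format, of n] ab[rule_format, of n] by auto
    moreover have "min ((a n)^2) ((b n)^2) \<le> z n * s n" if "z \<in> S" for z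
      using that sign a_le_s s_le_b by (intro interval_mult_ge) (auto simp: S_def)
    ultimately show ?thesis unfolding s_def by (rule hd_defect_SUP_le[OF _ bdd])
  qed
  have "z k \<le> s k" if "\<forall>k. z (k + P) = z k" "\<forall>k. s k \<le> z k \<and> z k \<le> b k"
    "\<forall>k. hd_defect z k \<le> 0" for z k
  proof -
    have "a k \<le> z k" for k using a_le_s[of k] that(2) by (meson order_trans)
    then have "z \<in> S" unfolding S_def using that by blast
    then show ?thesis by (rule le_s)
  qed
  then have "hd_solution s"
    using s_periodic pb s_le_b \<open>\<And>n. s n \<noteq> 0\<close> s_sub super
    by (intro hd_solution_of_maximal[of s P b]) auto
  then show ?thesis using s_periodic a_le_s s_le_b by blast
qed

section \<open>Periodic solutions near a nonvanishing solution\<close>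

lemma hd_defect_solution_minus:
  assumes "hd_solution y" "y k * (y k - u k) > 0"
    and "u (k + 1) + u (k - 1) - 2 * u k \<le> u k / (y k * (y k - u k))"
    and "z k = y k - u k" "y (k + 1) - u (k + 1) \<le> z (k + 1)" "y (k - 1) - u (k - 1) \<le> z (k - 1)"
  shows "hd_defect z k \<le> 0"
proof -
  have "y k \<noteq> 0" "y k - u k \<noteq> 0" using assms(2) by auto
  have "hd_defect z k \<le> 2 * (y k - u k) - (y (k + 1) - u (k + 1)) - (y (k - 1) - u (k - 1))
      - 1 / (y k - u k)"
    using assms(4-6) unfolding hd_defect_def by simp
  also have "\<dots> = 1 / y k + (u (k + 1) + u (k - 1) - 2 * u k) - 1 / (y k - u k)"
    using hd_solution_rec[OF assms(1), of k] by (simp add: algebra_simps)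
  also have "\<dots> \<le> 1 / y k + u k / (y k * (y k - u k)) - 1 / (y k - u k)"
    using assms(3) by simp
  also have "\<dots> = 0"
    using \<open>y k \<noteq> 0\<close> \<open>y k - u k \<noteq> 0\<close> by (simp add: field_simps)
  finally show ?thesis .
qed

text \<open>The window [lo, hi] of y, cut at ma and ka, is repeated periodically.\<close>
locale hd_window =
  fixes y :: "int \<Rightarrow> real" and lo hi ma ka :: int and \<epsilon> \<kappa> :: real
  assumes solution: "hd_solution y" and nonzero: "\<And>n. y n \<noteq> 0"
    and window: "lo \<le> ma" "ma < - 1" "0 < ka" "ka \<le> hi"
    and edges: "0 < y ma" "y ma \<le> \<epsilon> + \<kappa> * of_int (- 1 - ma)"
      "0 < y ka" "y ka \<le> \<epsilon> + \<kappa> * of_int ka"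
    and \<epsilon>_pos: "\<epsilon> > 0" and \<kappa>_pos: "\<kappa> > 0"
    and \<kappa>_le: "\<And>k. k \<in> {- 1, 0} \<Longrightarrow> \<kappa> * (\<bar>y k\<bar> * (\<bar>y k\<bar> + \<epsilon>)) \<le> \<epsilon>"
begin

definition period :: int where
  "period = hi - lo + 1"

definition wrap :: "int \<Rightarrow> int" where
  "wrap n = lo + (n - lo) mod period"

definition depth :: real where
  "depth = (of_int period)^2 + 1 + (\<Sum>j=lo..hi. \<bar>y j\<bar>)"

definition height :: real where
  "height = min (1 / (2 * depth + 2)) (Min ((\<lambda>j. \<bar>y j\<bar>) ` {lo..hi}))"

definition tent :: "int \<Rightarrow> real" where
  "tent n = \<epsilon> + \<kappa> * of_int (if n \<ge> 0 then n else - 1 - n)"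

text \<open>On the positive sites of the periodized y the background is the small constant
  height; on the negative sites it is a parabola, whose second difference 2 dominates the
  term 1/|background| \<le> 1 of the defect.\<close>
definition background :: "int \<Rightarrow> real" where
  "background n =
    (if y (wrap n) > 0 then height else - depth + (of_int ((n - ka) mod period))^2)"

text \<open>Between the cut points ma and ka, the lower function follows y minus a tent that
  equals \<epsilon> at -1 and 0 and grows with the small slope \<kappa>; at the cut points y is below
  the tent, so there the background takes over.\<close>
definition lower :: "int \<Rightarrow> real" where
  "lower n =
    (if ma < wrap n \<and> wrap n < ka then max (background n) (y (wrap n) - tent (wrap n))
     else background n)"

lemma period_pos: "period > 0"
  using window unfolding period_def by simp

lemma wrap_bounds: "lo \<le> wrap n" "wrap n \<le> hi"
  using period_pos pos_mod_bound[of period "n - lo"] unfolding wrap_def period_def by auto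

lemma wrap_id: "lo \<le> n \<Longrightarrow> n \<le> hi \<Longrightarrow> wrap n = n"
  unfolding wrap_def period_def by simp

lemma wrap_mod: "wrap n mod period = n mod period"
  unfolding wrap_def by (simp add: mod_add_right_eq)

lemma wrap_eq_ka:
  assumes "(n - ka) mod period = 0"
  shows "wrap n = ka"
proof -
  have "(n - lo) mod period = ((n - ka) mod period + (ka - lo)) mod period"
    by (simp add: mod_add_left_eq)
  also have "\<dots> = ka - lo" using assms window unfolding period_def by simp
  finally show ?thesis unfolding wrap_def by simp
qed

lemma wrap_periodic: "wrap (n + period) = wrap n"
  using mod_add_self2[of "n - lo" period] unfolding wrap_def by (simp add: algebra_simps)

lemma sum_abs_le: "lo \<le> j \<Longrightarrow> j \<le> hi \<Longrightarrow> \<bar>y j\<bar> \<le> (\<Sum>j=lo..hi. \<bar>y j\<bar>)"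
  by (intro member_le_sum) auto

lemma depth_ge: "(of_int period)^2 + 1 \<le> depth"
  unfolding depth_def by (simp add: sum_nonneg)

lemma depth_ge_1: "1 \<le> depth"
  using depth_ge zero_le_power2[of "of_int period :: real"] by linarith

lemma height_pos: "height > 0"
proof -
  have "0 < Min ((\<lambda>j. \<bar>y j\<bar>) ` {lo..hi})"
    using nonzero window by (subst Min_gr_iff) auto
  then show ?thesis using depth_ge_1 unfolding height_def by simp
qed

lemma height_le: "height \<le> 1 / (2 * depth + 2)" "lo \<le> j \<Longrightarrow> j \<le> hi \<Longrightarrow> height \<le> \<bar>y j\<bar>"
  unfolding height_def by (auto intro: min.coboundedI2 Min_le)

lemma mod_period_sq_le: "(of_int (n mod period))^2 \<le> (of_int period :: real)^2"
  using less_imp_le[OF pos_mod_bound[OF period_pos]] pos_mod_sign[OF period_pos]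
  by (intro power_mono) auto

lemma background_periodic: "background (n + period) = background n"
  using mod_add_self2[of "n - ka" period]
  unfolding background_def wrap_periodic by (simp add: algebra_simps)

lemma lower_periodic: "lower (n + period) = lower n"
  unfolding lower_def background_periodic wrap_periodic ..

lemma background_ge_parabola: "- depth + (of_int ((n - ka) mod period))^2 \<le> background n"
  using mod_period_sq_le[of "n - ka"] depth_ge height_pos unfolding background_def by auto

lemma background_at_ka: "(n - ka) mod period = 0 \<Longrightarrow> background n = height"
  using wrap_eq_ka edges unfolding background_def by simp

lemma hd_defect_background_pos:
  assumes above: "\<And>k. background k \<le> z k" and "z n = height"
  shows "hd_defect z n \<le> 0"
proof -
  have "1 / (2 * depth + 2) \<le> 1" using depth_ge_1 by simp
  then have "height \<le> 1" using height_le(1) by linarith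
  have "- depth \<le> z k" for k
    using above[of k] background_ge_parabola[of k] zero_le_power2[of "of_int ((k - ka) mod period) :: real"]
    by linarith
  then have "hd_defect z n \<le> 2 * height + 2 * depth - 1 / height"
    using \<open>z n = height\<close> unfolding hd_defect_def by (smt (verit))
  also have "\<dots> \<le> 0"
  proof -
    have "height * (2 * height + 2 * depth) \<le> height * (2 * depth + 2)"
      using height_pos \<open>height \<le> 1\<close> by (intro mult_left_mono) auto
    also have "\<dots> \<le> 1" using height_le(1) height_pos depth_ge_1 by (simp add: field_simps)
    finally show ?thesis using height_pos by (simp add: field_simps)
  qed
  finally show ?thesis .
qed

lemma hd_defect_background_neg:
  assumes above: "\<And>k. background k \<le> z k" and "y (wrap n) < 0" "z n = background n"
  shows "hd_defect z n \<le> 0"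
proof -
  define q where "q = (n - ka) mod period"
  have "q \<noteq> 0" using assms(2) wrap_eq_ka edges unfolding q_def by auto
  have q: "0 \<le> q" "q < period" using period_pos unfolding q_def by auto
  have zn: "z n = - depth + (of_int q)^2"
    using assms(2,3) unfolding background_def q_def by simp
  have right: "- depth + (of_int (q + 1))^2 \<le> z (n + 1)"
  proof (cases "q + 1 = period")
    case True
    then have "((n + 1) - ka) mod period = 0" unfolding q_def by (metis mod_add_left_eq mod_self add.commute add_diff_eq)
    then have "background (n + 1) = height" by (rule background_at_ka)
    moreover have "- depth + (of_int (q + 1))^2 \<le> - 1" using True depth_ge by simp
    ultimately show ?thesis using above[of "n + 1"] height_pos by linarith
  next
    case False
    have "((n + 1) - ka) mod period = ((n - ka) + 1) mod period" by (simp add: algebra_simps)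
    also have "\<dots> = (q + 1) mod period" unfolding q_def by (simp add: mod_add_left_eq)
    finally have "((n + 1) - ka) mod period = q + 1" using q False by simp
    then show ?thesis using above[of "n + 1"] background_ge_parabola[of "n + 1"] by simp
  qed
  have "((n - 1) - ka) mod period = ((n - ka) - 1) mod period" by (simp add: algebra_simps)
  also have "\<dots> = (q - 1) mod period" unfolding q_def by (simp add: mod_diff_left_eq)
  finally have "((n - 1) - ka) mod period = q - 1" using q \<open>q \<noteq> 0\<close> by simp
  then have left: "- depth + (of_int (q - 1))^2 \<le> z (n - 1)"
    using above[of "n - 1"] background_ge_parabola[of "n - 1"] by simp
  have "1 \<le> depth - (of_int q)^2" using mod_period_sq_le[of "n - ka"] depth_ge unfolding q_def by simp
  have "hd_defect z n \<le> 2 * (- depth + (of_int q)^2) - (- depth + (of_int (q + 1))^2)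
      - (- depth + (of_int (q - 1))^2) + 1 / (depth - (of_int q)^2)"
    using zn left right unfolding hd_defect_def by (simp add: minus_divide_right)
  also have "\<dots> = - 2 + 1 / (depth - (of_int q)^2)"
    by (simp add: power2_eq_square algebra_simps)
  also have "\<dots> \<le> 0"
    using \<open>1 \<le> depth - (of_int q)^2\<close> by (simp add: divide_le_eq)
  finally show ?thesis .
qed

lemma hd_defect_background:
  assumes "\<And>k. background k \<le> z k" "z n = background n"
  shows "hd_defect z n \<le> 0"
  using assms hd_defect_background_pos hd_defect_background_neg nonzero[of "wrap n"]
  unfolding background_def by (metis linorder_neqE_linordered_idom)

lemma background_le_lower: "background n \<le> lower n"
  unfolding lower_def by simp

lemma tent_ge: "\<epsilon> \<le> tent n"
  using \<kappa>_pos unfolding tent_def by simp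

lemma tent_curvature: "tent (k + 1) + tent (k - 1) - 2 * tent k = (if k \<in> {- 1, 0} then \<kappa> else 0)"
  unfolding tent_def by (auto simp: algebra_simps)

lemma tent_below_curvature:
  assumes "y k * (y k - tent k) > 0"
  shows "tent (k + 1) + tent (k - 1) - 2 * tent k \<le> tent k / (y k * (y k - tent k))"
proof (cases "k \<in> {- 1, 0}")
  case True
  then have "tent k = \<epsilon>" unfolding tent_def by auto
  have "y k * (y k - \<epsilon>) \<le> \<bar>y k\<bar> * (\<bar>y k\<bar> + \<epsilon>)"
    using \<epsilon>_pos by (cases "y k \<ge> 0") (auto simp: algebra_simps)
  then have "\<kappa> * (y k * (y k - \<epsilon>)) \<le> \<epsilon>"
    using \<kappa>_le[OF True] \<kappa>_pos by (smt (verit) mult_left_mono)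
  then show ?thesis
    using True assms \<open>tent k = \<epsilon>\<close> unfolding tent_curvature by (simp add: field_simps)
next
  case False
  have "tent k > 0" using tent_ge[of k] \<epsilon>_pos by linarith
  then show ?thesis using False assms unfolding tent_curvature by simp
qed

lemma hd_defect_lower_window:
  assumes "lo \<le> k" "k \<le> hi"
  shows "hd_defect lower k \<le> 0"
proof (cases "lower k = background k")
  case True
  then show ?thesis using background_le_lower by (intro hd_defect_background)
next
  case False
  with assms have k: "ma < k" "k < ka" and lower_k: "lower k = y k - tent k"
    and above: "background k < y k - tent k"
    unfolding lower_def wrap_id[OF assms] by (auto split: if_splits)
  have follows: "y j - tent j \<le> lower j" if "ma \<le> j" "j \<le> ka" for j
  proof (cases "j = ma \<or> j = ka")
    case True
    then have "wrap j = j" using window by (auto intro: wrap_id)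
    then have "background j = height" using True edges unfolding background_def by auto
    moreover have "y j \<le> tent j" using True edges window unfolding tent_def by auto
    ultimately show ?thesis using background_le_lower[of j] height_pos by linarith
  next
    case False
    with that have "wrap j = j" "ma < j" "j < ka" using window by (auto intro: wrap_id)
    then show ?thesis unfolding lower_def by simp
  qed
  have "y k * (y k - tent k) > 0"
  proof (cases "y k > 0")
    case True
    then have "background k = height" using wrap_id[OF assms] unfolding background_def by simp
    then show ?thesis using True above height_pos by simp
  next
    case False
    then have "y k < 0" using nonzero[of k] by simp
    moreover have "y k - tent k < 0" using \<open>y k < 0\<close> tent_ge[of k] \<epsilon>_pos by simp
    ultimately show ?thesis by (simp add: mult_neg_neg)
  qed
  then show ?thesis
    using k lower_k follows[of "k + 1"] follows[of "k - 1"]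
    by (intro hd_defect_solution_minus[OF solution _ tent_below_curvature]) auto
qed

lemma hd_defect_lower: "hd_defect lower n \<le> 0"
proof -
  have "hd_defect lower n = hd_defect lower (wrap n)"
    using periodic_mod_eq[of "hd_defect lower" period n "wrap n"] wrap_mod
      hd_defect_periodic[of lower period] lower_periodic by simp
  then show ?thesis using hd_defect_lower_window wrap_bounds by simp
qed

lemma lower_le: "lower n \<le> y (wrap n)"
proof -
  have "background n \<le> y (wrap n)"
  proof (cases "y (wrap n) > 0")
    case True
    then show ?thesis using height_le(2)[OF wrap_bounds, of n] unfolding background_def by simp
  next
    case False
    have "\<bar>y (wrap n)\<bar> \<le> (\<Sum>j=lo..hi. \<bar>y j\<bar>)" using sum_abs_le[OF wrap_bounds] .
    then show ?thesis
      using False mod_period_sq_le[of "n - ka"] unfolding background_def depth_def by simp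
  qed
  then show ?thesis using tent_ge[of "wrap n"] \<epsilon>_pos unfolding lower_def by auto
qed

lemma lower_pos: "y (wrap n) > 0 \<Longrightarrow> lower n > 0"
  using background_le_lower[of n] height_pos unfolding background_def by simp

lemma lower_near_origin:
  assumes "k \<in> {- 1, 0}"
  shows "y k - \<epsilon> \<le> lower k"
proof -
  have "wrap k = k" "ma < k" "k < ka" using assms window by (auto intro: wrap_id)
  moreover have "tent k = \<epsilon>" using assms unfolding tent_def by auto
  ultimately show ?thesis unfolding lower_def by simp
qed

end

text \<open>The subsolution for y and the negated subsolution for -y enclose the periodization
  of y, so Perron's method applies between them.\<close>
lemma hd_window_periodic_solution:
  assumes "hd_window y lo hi ma ka \<epsilon> \<kappa>" "hd_window (\<lambda>n. - y n) lo hi mb kb \<epsilon> \<kappa>"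
  shows "\<exists>s P. P > 0 \<and> (\<forall>n. s (n + P) = s n) \<and> hd_solution s \<and> (\<forall>n. s n \<noteq> 0) \<and>
    \<bar>s (- 1) - y (- 1)\<bar> \<le> \<epsilon> \<and> \<bar>s 0 - y 0\<bar> \<le> \<epsilon>"
proof -
  interpret up: hd_window y lo hi ma ka \<epsilon> \<kappa> by fact
  interpret down: hd_window "\<lambda>n. - y n" lo hi mb kb \<epsilon> \<kappa> by fact
  define b where "b n = - down.lower n" for n
  have between: "up.lower n \<le> b n" for n
    using up.lower_le[of n] down.lower_le[of n] unfolding b_def by linarith
  have sign: "up.lower n > 0 \<or> b n < 0" for n
  proof (cases "y (up.wrap n) > 0")
    case False
    then have "- y (up.wrap n) > 0" using up.nonzero by (simp add: less_le)
    then show ?thesis using down.lower_pos unfolding b_def by simp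
  qed (simp add: up.lower_pos)
  have super: "hd_defect b n \<ge> 0" for n
    unfolding b_def hd_defect_uminus using down.hd_defect_lower by simp
  have "\<forall>n. b (n + up.period) = b n" unfolding b_def using down.lower_periodic by simp
  then obtain s where s: "\<forall>n. s (n + up.period) = s n" "\<forall>n. up.lower n \<le> s n \<and> s n \<le> b n"
    "hd_solution s"
    using periodic_solution_between[of up.lower up.period b] up.lower_periodic up.hd_defect_lower
      between sign super by blast
  have "s n \<noteq> 0" for n
    using s(2)[rule_format, of n] sign[of n] by linarith
  moreover have "\<bar>s k - y k\<bar> \<le> \<epsilon>" if "k \<in> {- 1, 0}" for k
    using up.lower_near_origin[OF that] down.lower_near_origin[OF that] s(2)
    unfolding b_def by (simp add: abs_le_iff) (smt (verit))
  ultimately show ?thesis using s up.period_pos by auto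
qed

lemma periodic_solution_near:
  fixes y :: "int \<Rightarrow> real" and \<epsilon> :: real
  assumes sol: "hd_solution y" and nz: "\<forall>n. y n \<noteq> 0" and "\<epsilon> > 0"
  shows "\<exists>s P. P > 0 \<and> (\<forall>n. s (n + P) = s n) \<and> hd_solution s \<and> (\<forall>n. s n \<noteq> 0) \<and>
    \<bar>s (- 1) - y (- 1)\<bar> \<le> \<epsilon> \<and> \<bar>s 0 - y 0\<bar> \<le> \<epsilon>"
proof -
  define S where "S = \<bar>y (- 1)\<bar> + \<bar>y 0\<bar> + \<epsilon>"
  define \<kappa> where "\<kappa> = \<epsilon> / S^2"
  have "S > 0" unfolding S_def using \<open>\<epsilon> > 0\<close> by simp
  then have "\<kappa> > 0" unfolding \<kappa>_def using \<open>\<epsilon> > 0\<close> by simp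
  have \<kappa>_le: "\<kappa> * (\<bar>y k\<bar> * (\<bar>y k\<bar> + \<epsilon>)) \<le> \<epsilon>" if "k \<in> {- 1, 0}" for k
  proof -
    have "\<bar>y k\<bar> * (\<bar>y k\<bar> + \<epsilon>) \<le> S^2"
      using that \<open>\<epsilon> > 0\<close> unfolding S_def power2_eq_square by (intro mult_mono) auto
    then have "\<kappa> * (\<bar>y k\<bar> * (\<bar>y k\<bar> + \<epsilon>)) \<le> \<kappa> * S^2"
      using \<open>\<kappa> > 0\<close> by (intro mult_left_mono) auto
    also have "\<dots> = \<epsilon>" unfolding \<kappa>_def using \<open>S > 0\<close> by simp
    finally show ?thesis .
  qed
  obtain ma ka where up: "ma < - 1" "0 < ka" "0 < y ma" "y ma \<le> \<kappa> * of_int (- 1 - ma)"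
    "0 < y ka" "y ka \<le> \<kappa> * of_int ka"
    using hd_solution_cut_points[OF sol nz \<open>\<kappa> > 0\<close>] by blast
  obtain mb kb where down: "mb < - 1" "0 < kb" "0 < - y mb" "- y mb \<le> \<kappa> * of_int (- 1 - mb)"
    "0 < - y kb" "- y kb \<le> \<kappa> * of_int kb"
    using hd_solution_cut_points[OF hd_solution_uminus[OF sol] _ \<open>\<kappa> > 0\<close>] nz by fastforce
  have "hd_window y (min ma mb) (max ka kb) ma ka \<epsilon> \<kappa>"
    using sol nz up \<kappa>_le \<open>\<epsilon> > 0\<close> \<open>\<kappa> > 0\<close> by unfold_locales auto
  moreover have "hd_window (\<lambda>n. - y n) (min ma mb) (max ka kb) mb kb \<epsilon> \<kappa>"
    using hd_solution_uminus[OF sol] nz down \<kappa>_le \<open>\<epsilon> > 0\<close> \<open>\<kappa> > 0\<close> by unfold_locales auto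
  ultimately show ?thesis by (rule hd_window_periodic_solution)
qed

section \<open>Density of hyperbolic periodic points\<close>

definition orbit_defined :: "nat \<Rightarrow> (real \<times> real) set" where
  "orbit_defined k = {p. iterates_defined k p \<and> iterates_defined k (hd_reverse p)}"

lemma hd_reverse_hd_reverse [simp]: "hd_reverse (hd_reverse p) = p"
  unfolding hd_reverse_def by simp

lemma isCont_hd_reverse: "isCont hd_reverse p"
  unfolding hd_reverse_def by (intro continuous_intros)

lemma iterates_defined_Suc:
  "iterates_defined (Suc k) p \<longleftrightarrow> iterates_defined k p \<and> snd ((henon_devaney ^^ k) p) \<noteq> 0"
  unfolding iterates_defined_def using less_Suc_eq by auto

lemma open_iterates_defined: "open {p. iterates_defined k p}"
proof (induction k)
  case 0
  then show ?case by (simp add: iterates_defined_def)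
next
  case (Suc k)
  have "continuous_on {p. iterates_defined k p} (\<lambda>p. snd ((henon_devaney ^^ k) p))"
    by (intro continuous_at_imp_continuous_on ballI continuous_intros isCont_funpow_henon_devaney)
      simp
  then have "open ({p. iterates_defined k p} \<inter> (\<lambda>p. snd ((henon_devaney ^^ k) p)) -` (- {0}))"
    using Suc.IH by (intro continuous_open_preimage) auto
  then show ?case by (simp add: iterates_defined_Suc Int_def)
qed

lemma open_orbit_defined: "open (orbit_defined k)"
proof -
  have "orbit_defined k = {p. iterates_defined k p} \<inter> hd_reverse -` {p. iterates_defined k p}"
    unfolding orbit_defined_def by auto
  then show ?thesis
    by (metis open_Int open_iterates_defined continuous_open_vimage isCont_hd_reverse)
qed

text \<open>f^k is a local diffeomorphism (its Jacobian has determinant 1), so its second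
  coordinate cannot vanish identically on an open set.\<close>
lemma iterate_off_axis:
  assumes "open V" "p \<in> V" and defined: "V \<subseteq> {q. iterates_defined k q}"
  shows "\<exists>q\<in>V. snd ((henon_devaney ^^ k) q) \<noteq> 0"
proof (rule ccontr)
  assume "\<not> ?thesis"
  then have zero: "snd ((henon_devaney ^^ k) q) = 0" if "q \<in> V" for q using that by blast
  obtain a b c d where det: "a * d - b * c = 1"
    and D: "((henon_devaney ^^ k) has_derivative matrix2 a b c d) (at p)"
    using funpow_henon_devaney_has_derivative[of k p] defined assms(2) by blast
  have "((\<lambda>q. snd ((henon_devaney ^^ k) q)) has_derivative (\<lambda>h. c * fst h + d * snd h)) (at p)"
    using has_derivative_snd[OF D] by (simp add: matrix2_def)
  moreover have "((\<lambda>q. snd ((henon_devaney ^^ k) q)) has_derivative (\<lambda>h. 0)) (at p)"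
    using zero assms(1,2) by (intro has_derivative_transform_within_open[OF has_derivative_const]) auto
  ultimately have "(\<lambda>h :: real \<times> real. c * fst h + d * snd h) = (\<lambda>h. 0)"
    by (rule has_derivative_unique)
  then have "c * fst h + d * snd h = 0" for h :: "real \<times> real" by (simp add: fun_eq_iff)
  from this[of "(1, 0)"] this[of "(0, 1)"] have "c = 0" "d = 0" by simp_all
  then show False using det by simp
qed

lemma orbit_defined_meets_open:
  assumes "open U" "U \<noteq> {}"
  shows "U \<inter> orbit_defined k \<noteq> {}"
  using assms
proof (induction k arbitrary: U)
  case 0
  then show ?case by (simp add: orbit_defined_def iterates_defined_def)
next
  case (Suc k)
  define V where "V = U \<inter> orbit_defined k"
  have "open V" "V \<noteq> {}" unfolding V_def using Suc open_orbit_defined by auto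
  then obtain p1 where "p1 \<in> V" "snd ((henon_devaney ^^ k) p1) \<noteq> 0"
    using iterate_off_axis[of V] unfolding V_def orbit_defined_def by blast
  define W where "W = V \<inter> {p. iterates_defined (Suc k) p}"
  have "open W" unfolding W_def using \<open>open V\<close> open_iterates_defined by blast
  have "p1 \<in> W"
    using \<open>p1 \<in> V\<close> \<open>snd ((henon_devaney ^^ k) p1) \<noteq> 0\<close>
    unfolding W_def V_def orbit_defined_def iterates_defined_Suc by simp
  have "open (hd_reverse -` W)"
    using \<open>open W\<close> isCont_hd_reverse by (auto intro: continuous_open_vimage)
  moreover have "hd_reverse p1 \<in> hd_reverse -` W" using \<open>p1 \<in> W\<close> by simp
  moreover have "hd_reverse -` W \<subseteq> {q. iterates_defined k q}"
    unfolding W_def V_def orbit_defined_def by auto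
  ultimately obtain z where "hd_reverse z \<in> W" "snd ((henon_devaney ^^ k) z) \<noteq> 0"
    using iterate_off_axis[of "hd_reverse -` W"] by blast
  then have "hd_reverse z \<in> U \<inter> orbit_defined (Suc k)"
    unfolding W_def V_def orbit_defined_def iterates_defined_Suc by simp
  then show ?case by blast
qed

lemma closure_orbit_defined: "closure (orbit_defined k) = UNIV"
proof -
  have "- closure (orbit_defined k) \<inter> orbit_defined k = {}" using closure_subset by blast
  then show ?thesis using orbit_defined_meets_open[of "- closure (orbit_defined k)" k] by auto
qed

lemma closure_Inter_orbit_defined: "closure (\<Inter>k. orbit_defined k) = UNIV"
proof -
  have "openin (top_of_set UNIV) T \<and> UNIV \<subseteq> closure T" if "T \<in> range orbit_defined" for T
    using that open_orbit_defined closure_orbit_defined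
    unfolding subtopology_UNIV by (auto simp only: open_openin)
  then have "UNIV \<subseteq> closure (\<Inter>(range orbit_defined))"
    by (intro Baire[OF closed_UNIV countable_image]) auto
  then show ?thesis by auto
qed

lemma orbit_seq_nonzero:
  assumes "p \<in> (\<Inter>k. orbit_defined k)"
  shows "orbit_seq p n \<noteq> 0"
proof -
  have "p \<in> orbit_defined (Suc (nat n))" "p \<in> orbit_defined (Suc (nat (- 1 - n)))"
    using assms by blast+
  then show ?thesis unfolding orbit_seq_def orbit_defined_def iterates_defined_def by auto
qed

lemma hyperbolic_periodic_point_near:
  assumes "p \<in> (\<Inter>k. orbit_defined k)" "e > 0"
  shows "\<exists>q. hyperbolic_periodic_point q \<and> dist q p < e"
proof -
  obtain s P where "P > 0" "\<forall>n. s (n + P) = s n" "hd_solution s" "\<forall>n. s n \<noteq> 0"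
    and close: "\<bar>s (- 1) - orbit_seq p (- 1)\<bar> \<le> e / 4" "\<bar>s 0 - orbit_seq p 0\<bar> \<le> e / 4"
    using periodic_solution_near[OF hd_solution_orbit_seq allI[OF orbit_seq_nonzero[OF assms(1)]],
        of "e / 4"]
      \<open>e > 0\<close> by auto
  define q where "q = (s (- 1) - s 0, s 0)"
  have "hyperbolic_periodic_point q"
    unfolding q_def by (rule periodic_point_hyperbolic[OF periodic_point_of_solution]) fact+
  have "dist q p \<le> \<bar>fst q - fst p\<bar> + \<bar>snd q - snd p\<bar>"
    using sqrt_sum_squares_le_sum_abs by (simp add: dist_prod_def dist_real_def)
  also have "\<dots> \<le> 3 * e / 4"
  proof -
    have "fst q - fst p = (s (- 1) - orbit_seq p (- 1)) - (s 0 - orbit_seq p 0)"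
      unfolding q_def orbit_seq_0 orbit_seq_minus_1 by simp
    then have "\<bar>fst q - fst p\<bar> \<le> \<bar>s (- 1) - orbit_seq p (- 1)\<bar> + \<bar>s 0 - orbit_seq p 0\<bar>"
      by (simp only: abs_triangle_ineq4)
    then have "\<bar>fst q - fst p\<bar> \<le> e / 2" using close by linarith
    moreover have "\<bar>snd q - snd p\<bar> \<le> e / 4" using close(2) unfolding q_def orbit_seq_0 by simp
    ultimately show ?thesis by simp
  qed
  also have "\<dots> < e" using \<open>e > 0\<close> by simp
  finally show ?thesis using \<open>hyperbolic_periodic_point q\<close> by blast
qed

theorem mainTheorem6:
  shows "closure {p. hyperbolic_periodic_point p} = UNIV"
proof -
  have "p \<in> closure {p. hyperbolic_periodic_point p}" if generic: "p \<in> (\<Inter>k. orbit_defined k)" for p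
    unfolding closure_approachable
  proof (intro allI impI)
    fix e :: real assume "e > 0"
    then obtain q where "hyperbolic_periodic_point q" "dist q p < e"
      using hyperbolic_periodic_point_near[OF generic] by blast
    then show "\<exists>q\<in>{p. hyperbolic_periodic_point p}. dist q p < e" by blast
  qed
  then have "(\<Inter>k. orbit_defined k) \<subseteq> closure {p. hyperbolic_periodic_point p}" by blast
  then have "closure (\<Inter>k. orbit_defined k) \<subseteq> closure {p. hyperbolic_periodic_point p}"
    by (simp add: closure_minimal)
  then show ?thesis using closure_Inter_orbit_defined by auto
qed

end
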